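(* Let $(X,d,0)$ be a pointed metric space, let $(Y_j)_{j\in\varGamma}$ be a family of subsets of $X$, and let $(R_j)_{j\in\varGamma}$ be Lipschitz maps $R_j:X\to Y_j$ with $R_j(0)=0$ (so $0\in Y_j$) and $M:=\sup_{j}\|R_j\|_{\operatorname{Lip}}<\infty$. Suppose $\mathcal{U}$ is an ultrafilter on $\varGamma$ such that $\lim_{\mathcal{U}}R_j(x)=x$ in $(X,d)$ for every $x\in X$. Then \[\operatorname{Lip}_0(X)\stackrel{c}{\hookrightarrow}\left(\bigoplus_{j\in\varGamma}\operatorname{Lip}_0(Y_j)\right)_{\ell_\infty},\] where each $Y_j$ is pointed at $0$.
   Context: $\operatorname{Lip}_0(Z)$ denotes the Banach space of real Lipschitz functions on the pointed metric space $Z$ vanishing at the base point, normed by the smallest Lipschitz constant $\|\cdot\|_{\operatorname{Lip}}$ (also used for Lipschitz constants of maps). $\left(\bigoplus_jZ_j\right)_{\ell_\infty}$ is the space of families $(z_j)$ with $\sup_j\|z_j\|<\infty$ and the sup norm. $X\stackrel{c}{\hookrightarrow}Y$ means $Y$ contains a complemented subspace isomorphic to $X$. *)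

theory Defs
  imports "HOL-Analysis.Analysis"
begin

text \<open>Lip_0(Y) for a subset Y of the pointed metric space with base point p \<in> Y.
  Functions on Y are represented canonically as functions on the whole type,
  extended by 0 outside Y.\<close>
definition lip0 :: "'a::metric_space \<Rightarrow> 'a set \<Rightarrow> ('a \<Rightarrow> real) set" where
  "lip0 p Y = {f. f p = 0 \<and> (\<forall>x. x \<notin> Y \<longrightarrow> f x = 0) \<and> (\<exists>C. C-lipschitz_on Y f)}"

definition lipnorm :: "'a::metric_space set \<Rightarrow> ('a \<Rightarrow> real) \<Rightarrow> real" where
  "lipnorm Y f = Inf {C. C-lipschitz_on Y f}"

definition linf_lip0 :: "'a::metric_space \<Rightarrow> ('j \<Rightarrow> 'a set) \<Rightarrow> ('j \<Rightarrow> 'a \<Rightarrow> real) set" where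
  "linf_lip0 p Y = {F. (\<forall>j. F j \<in> lip0 p (Y j)) \<and> bdd_above (range (\<lambda>j. lipnorm (Y j) (F j)))}"

definition linf_norm :: "('j \<Rightarrow> 'a::metric_space set) \<Rightarrow> ('j \<Rightarrow> 'a \<Rightarrow> real) \<Rightarrow> real" where
  "linf_norm Y F = (SUP j. lipnorm (Y j) (F j))"

text \<open>Lip_0(X) (X = the whole type, base point p) is isomorphic to a complemented
  subspace W of the l_infinity sum: there is a linear isomorphism T of Lip_0(X) onto W
  (bounded with bounded inverse) and a bounded linear projection P of the sum onto W.\<close>
definition lip0_compl_embeds :: "'a::metric_space \<Rightarrow> ('j \<Rightarrow> 'a set) \<Rightarrow> bool" where
  "lip0_compl_embeds p Y \<longleftrightarrow>
    (\<exists>W T P C.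
       W \<subseteq> linf_lip0 p Y \<and>
       T ` lip0 p UNIV = W \<and>
       (\<forall>f\<in>lip0 p UNIV. \<forall>g\<in>lip0 p UNIV. \<forall>a b.
          T (\<lambda>x. a * f x + b * g x) = (\<lambda>j x. a * T f j x + b * T g j x)) \<and>
       (\<forall>f\<in>lip0 p UNIV. linf_norm Y (T f) \<le> C * lipnorm UNIV f \<and>
                          lipnorm UNIV f \<le> C * linf_norm Y (T f)) \<and>
       P ` linf_lip0 p Y \<subseteq> W \<and>
       (\<forall>F\<in>W. P F = F) \<and>
       (\<forall>F\<in>linf_lip0 p Y. \<forall>G\<in>linf_lip0 p Y. \<forall>a b.
          P (\<lambda>j x. a * F j x + b * G j x) = (\<lambda>j x. a * P F j x + b * P G j x)) \<and>
       (\<forall>F\<in>linf_lip0 p Y. linf_norm Y (P F) \<le> C * linf_norm Y F))"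

definition is_ultrafilter :: "'j filter \<Rightarrow> bool" where
  "is_ultrafilter U \<longleftrightarrow> U \<noteq> bot \<and> (\<forall>P. eventually P U \<or> eventually (\<lambda>x. \<not> P x) U)"

end

theory Submission
  imports Defs
begin

text \<open>Restriction \<open>f \<mapsto> (f|Y\<^sub>j)\<^sub>j\<close> embeds \<open>Lip\<^sub>0(X)\<close> into the \<open>\<ell>\<^sub>\<infinity>\<close>-sum with norm at most 1.
  Conversely, a family \<open>(F\<^sub>j)\<close> is pulled back to \<open>X\<close> along the maps \<open>R\<^sub>j\<close> and averaged
  by the ultrafilter: \<open>E F x = lim\<^sub>\<U> F\<^sub>j (R\<^sub>j x)\<close>. The limit exists because the values are
  bounded and \<open>\<U>\<close> is an ultrafilter; it is linear and \<open>M \<parallel>F\<parallel>\<close>-Lipschitz. Since \<open>R\<^sub>j x \<rightarrow> x\<close>,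
  \<open>E\<close> is a left inverse of restriction, which gives both the lower norm bound for the embedding
  and the fact that restriction after \<open>E\<close> is a bounded projection onto its range.\<close>

lemma ultrafilter_tendsto_Lim_compact:
  fixes h :: "'j \<Rightarrow> 'b::t2_space"
  assumes U: "is_ultrafilter U" and K: "compact K" and ev: "eventually (\<lambda>j. h j \<in> K) U"
  shows "(h \<longlongrightarrow> Lim U h) U"
proof -
  have U_nontrivial: "U \<noteq> bot" using U by (simp add: is_ultrafilter_def)
  then have "filtermap h U \<noteq> bot" by (simp add: filtermap_bot_iff)
  moreover have "eventually (\<lambda>y. y \<in> K) (filtermap h U)"
    using ev by (simp add: eventually_filtermap)
  ultimately obtain x where cluster: "inf (nhds x) (filtermap h U) \<noteq> bot"
    using compact_filter[THEN iffD1, OF K] by blast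
  have "(h \<longlongrightarrow> x) U"
    unfolding tendsto_def
  proof (intro allI impI)
    fix S :: "'b set" assume S: "open S" "x \<in> S"
    show "eventually (\<lambda>j. h j \<in> S) U"
    proof (rule ccontr)
      assume "\<not> eventually (\<lambda>j. h j \<in> S) U"
      then have "eventually (\<lambda>y. y \<notin> S) (filtermap h U)"
        using U by (auto simp: is_ultrafilter_def eventually_filtermap)
      moreover have "eventually (\<lambda>y. y \<in> S) (nhds x)"
        using S by (rule eventually_nhds_in_open)
      ultimately have "eventually (\<lambda>_. False) (inf (nhds x) (filtermap h U))"
        unfolding eventually_inf by blast
      then show False using cluster by (simp add: eventually_False)
    qed
  qed
  then show ?thesis using tendsto_Lim U_nontrivial by (metis trivial_limit_def)
qed

lemma ultrafilter_tendsto_Lim_bounded: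
  fixes h :: "'j \<Rightarrow> real"
  assumes "is_ultrafilter U" and "\<And>j. \<bar>h j\<bar> \<le> B"
  shows "(h \<longlongrightarrow> Lim U h) U"
proof (rule ultrafilter_tendsto_Lim_compact[where K = "{-B..B}"])
  show "eventually (\<lambda>j. h j \<in> {-B..B}) U"
    using assms(2) by (intro always_eventually allI) (metis abs_le_iff atLeastAtMost_iff minus_le_iff)
qed (use assms(1) in auto)

lemma lipnorm_le: "C-lipschitz_on S f \<Longrightarrow> lipnorm S f \<le> C"
  unfolding lipnorm_def
  by (rule cInf_lower) (auto intro: bdd_belowI[where m=0] simp: lipschitz_on_def)

lemma lipnorm_nonneg: "C-lipschitz_on S f \<Longrightarrow> 0 \<le> lipnorm S f"
  unfolding lipnorm_def
  by (rule cInf_greatest) (auto simp: lipschitz_on_def)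

lemma lipschitz_on_lipnorm:
  assumes "C-lipschitz_on S f"
  shows "(lipnorm S f)-lipschitz_on S f"
proof (rule lipschitz_onI)
  show "0 \<le> lipnorm S f" by (rule lipnorm_nonneg[OF assms])
  fix x y assume xy: "x \<in> S" "y \<in> S"
  show "dist (f x) (f y) \<le> lipnorm S f * dist x y"
  proof (cases "x = y")
    case False
    then have d: "dist x y > 0" by simp
    have "dist (f x) (f y) / dist x y \<le> lipnorm S f"
      unfolding lipnorm_def
    proof (rule cInf_greatest)
      show "{C. C-lipschitz_on S f} \<noteq> {}" using assms by blast
      fix D assume "D \<in> {C. C-lipschitz_on S f}"
      then have "dist (f x) (f y) \<le> D * dist x y" using xy by (auto simp: lipschitz_on_def)
      then show "dist (f x) (f y) / dist x y \<le> D" using d by (simp add: divide_le_eq)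
    qed
    then show ?thesis using d by (simp add: divide_le_eq)
  qed simp
qed

lemma lip0_lipschitz: "f \<in> lip0 p S \<Longrightarrow> (lipnorm S f)-lipschitz_on S f"
  by (auto simp: lip0_def intro: lipschitz_on_lipnorm)

lemma lip0_continuous: "f \<in> lip0 p UNIV \<Longrightarrow> continuous_on UNIV f"
  by (rule lipschitz_on_continuous_on[OF lip0_lipschitz])

lemma lip0_lipnorm_nonneg: "f \<in> lip0 p S \<Longrightarrow> 0 \<le> lipnorm S f"
  by (rule lipschitz_on_nonneg[OF lip0_lipschitz])

lemma lipnorm_le_linf_norm: "F \<in> linf_lip0 p Y \<Longrightarrow> lipnorm (Y j) (F j) \<le> linf_norm Y F"
  unfolding linf_norm_def linf_lip0_def by (auto intro: cSUP_upper)

lemma linf_norm_le: "(\<And>j. lipnorm (Y j) (F j) \<le> B) \<Longrightarrow> linf_norm Y F \<le> B"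
  unfolding linf_norm_def by (rule cSUP_least) auto

lemma linf_lip0_lipschitz:
  assumes "F \<in> linf_lip0 p Y"
  shows "(linf_norm Y F)-lipschitz_on (Y j) (F j)"
proof -
  have "F j \<in> lip0 p (Y j)" using assms by (simp add: linf_lip0_def)
  from lip0_lipschitz[OF this] show ?thesis
    by (rule lipschitz_on_mono) (auto intro: lipnorm_le_linf_norm[OF assms])
qed

lemma linf_norm_nonneg: "F \<in> linf_lip0 p Y \<Longrightarrow> 0 \<le> linf_norm Y F"
  using linf_lip0_lipschitz[of F p Y undefined] by (rule lipschitz_on_nonneg)

lemma linf_lip0_base: "F \<in> linf_lip0 p Y \<Longrightarrow> F j p = 0"
  by (simp add: linf_lip0_def lip0_def)

definition restrict_family :: "('j \<Rightarrow> 'a set) \<Rightarrow> ('a \<Rightarrow> real) \<Rightarrow> 'j \<Rightarrow> 'a \<Rightarrow> real" where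
  "restrict_family Y f = (\<lambda>j x. if x \<in> Y j then f x else 0)"

lemma restrict_family_linear:
  "restrict_family Y (\<lambda>x. a * f x + b * g x) =
     (\<lambda>j x. a * restrict_family Y f j x + b * restrict_family Y g j x)"
  by (auto simp: restrict_family_def fun_eq_iff)

lemma restrict_family_in_linf_lip0:
  assumes f: "f \<in> lip0 p UNIV" and pY: "\<And>j. p \<in> Y j"
  shows "restrict_family Y f \<in> linf_lip0 p Y"
    and "linf_norm Y (restrict_family Y f) \<le> lipnorm UNIV f"
proof -
  have lip: "(lipnorm UNIV f)-lipschitz_on (Y j) (restrict_family Y f j)" for j
    using lip0_lipschitz[OF f] by (auto simp: lipschitz_on_def restrict_family_def)
  then have norm: "lipnorm (Y j) (restrict_family Y f j) \<le> lipnorm UNIV f" for j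
    by (rule lipnorm_le)
  have "restrict_family Y f j \<in> lip0 p (Y j)" for j
    using f lip pY by (auto simp: lip0_def restrict_family_def)
  then show "restrict_family Y f \<in> linf_lip0 p Y"
    using norm by (auto simp: linf_lip0_def intro!: bdd_aboveI[where M = "lipnorm UNIV f"])
  show "linf_norm Y (restrict_family Y f) \<le> lipnorm UNIV f"
    using norm by (rule linf_norm_le)
qed

definition ultra_extension :: "'j filter \<Rightarrow> ('j \<Rightarrow> 'a \<Rightarrow> 'a) \<Rightarrow> ('j \<Rightarrow> 'a \<Rightarrow> real) \<Rightarrow> 'a \<Rightarrow> real"
  where "ultra_extension U R F x = Lim U (\<lambda>j. F j (R j x))"

locale ultra_lipschitz_family =
  fixes p :: "'a::metric_space" and Y :: "'j \<Rightarrow> 'a set" and R :: "'j \<Rightarrow> 'a \<Rightarrow> 'a"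
    and U :: "'j filter" and M :: real
  assumes maps_into: "\<And>j x. R j x \<in> Y j"
    and base: "\<And>j. R j p = p"
    and lipschitz: "\<And>j. M-lipschitz_on UNIV (R j)"
    and ultra: "is_ultrafilter U"
begin

lemma M_nonneg: "0 \<le> M"
  using lipschitz lipschitz_on_nonneg by blast

lemma U_nontrivial: "U \<noteq> bot"
  using ultra by (simp add: is_ultrafilter_def)

lemma base_in: "p \<in> Y j"
  using maps_into[of j p] by (simp add: base)

lemma dist_pullback_le:
  assumes F: "F \<in> linf_lip0 p Y"
  shows "dist (F j (R j x)) (F j (R j y)) \<le> M * linf_norm Y F * dist x y"
proof -
  have "dist (F j (R j x)) (F j (R j y)) \<le> linf_norm Y F * dist (R j x) (R j y)"
    using linf_lip0_lipschitz[OF F, of j] maps_into by (auto simp: lipschitz_on_def)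
  also have "\<dots> \<le> linf_norm Y F * (M * dist x y)"
    using lipschitz[of j] linf_norm_nonneg[OF F]
    by (intro mult_left_mono) (auto simp: lipschitz_on_def)
  finally show ?thesis by (simp add: algebra_simps)
qed

lemma tendsto_ultra_extension:
  assumes F: "F \<in> linf_lip0 p Y"
  shows "((\<lambda>j. F j (R j x)) \<longlongrightarrow> ultra_extension U R F x) U"
  unfolding ultra_extension_def
proof (rule ultrafilter_tendsto_Lim_bounded[OF ultra])
  fix j
  show "\<bar>F j (R j x)\<bar> \<le> M * linf_norm Y F * dist x p"
    using dist_pullback_le[OF F, of j x p] by (simp add: base linf_lip0_base[OF F] dist_real_def)
qed

lemma ultra_extension_eqI:
  "((\<lambda>j. F j (R j x)) \<longlongrightarrow> l) U \<Longrightarrow> ultra_extension U R F x = l"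
  unfolding ultra_extension_def using tendsto_Lim U_nontrivial by (metis trivial_limit_def)

lemma ultra_extension_in_lip0:
  assumes F: "F \<in> linf_lip0 p Y"
  shows "ultra_extension U R F \<in> lip0 p UNIV"
    and "lipnorm UNIV (ultra_extension U R F) \<le> M * linf_norm Y F"
proof -
  have lip: "(M * linf_norm Y F)-lipschitz_on UNIV (ultra_extension U R F)"
  proof (rule lipschitz_onI)
    fix x y
    have "((\<lambda>j. dist (F j (R j x)) (F j (R j y))) \<longlongrightarrow>
        dist (ultra_extension U R F x) (ultra_extension U R F y)) U"
      by (intro tendsto_dist tendsto_ultra_extension F)
    then show "dist (ultra_extension U R F x) (ultra_extension U R F y) \<le> M * linf_norm Y F * dist x y"
      by (rule tendsto_le[OF U_nontrivial tendsto_const]) (simp add: dist_pullback_le[OF F])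
  qed (simp add: M_nonneg linf_norm_nonneg[OF F])
  have "ultra_extension U R F p = 0"
    by (rule ultra_extension_eqI) (simp add: base linf_lip0_base[OF F])
  with lip show "ultra_extension U R F \<in> lip0 p UNIV"
    by (auto simp: lip0_def)
  show "lipnorm UNIV (ultra_extension U R F) \<le> M * linf_norm Y F"
    using lip by (rule lipnorm_le)
qed

lemma ultra_extension_linear:
  assumes "F \<in> linf_lip0 p Y" and "G \<in> linf_lip0 p Y"
  shows "ultra_extension U R (\<lambda>j x. a * F j x + b * G j x) =
           (\<lambda>x. a * ultra_extension U R F x + b * ultra_extension U R G x)"
  using assms by (intro ext ultra_extension_eqI tendsto_add tendsto_mult_left tendsto_ultra_extension)

end

locale ultra_approximating_family = ultra_lipschitz_family +
  assumes approximates: "\<And>x. ((\<lambda>j. R j x) \<longlongrightarrow> x) U"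
begin

lemma tendsto_restriction_pullback:
  assumes f: "f \<in> lip0 p UNIV"
  shows "((\<lambda>j. restrict_family Y f j (R j x)) \<longlongrightarrow> f x) U"
proof -
  have "isCont f x"
    using lip0_continuous[OF f] by (simp add: continuous_on_eq_continuous_at)
  then have "((\<lambda>j. f (R j x)) \<longlongrightarrow> f x) U"
    using approximates by (rule isCont_tendsto_compose)
  then show ?thesis by (simp add: restrict_family_def maps_into)
qed

lemma ultra_extension_restrict_family:
  "f \<in> lip0 p UNIV \<Longrightarrow> ultra_extension U R (restrict_family Y f) = f"
  by (rule ext, rule ultra_extension_eqI, rule tendsto_restriction_pullback)

lemma lipnorm_le_linf_norm_restrict_family:
  assumes f: "f \<in> lip0 p UNIV"
  shows "lipnorm UNIV f \<le> M * linf_norm Y (restrict_family Y f)"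
  using ultra_extension_in_lip0(2)[OF restrict_family_in_linf_lip0(1)[where Y = Y, OF f base_in]]
  by (simp add: ultra_extension_restrict_family[OF f])

theorem lip0_compl_embeds: "lip0_compl_embeds p Y"
proof -
  let ?T = "restrict_family Y" and ?P = "\<lambda>F. restrict_family Y (ultra_extension U R F)"
  show ?thesis
    unfolding lip0_compl_embeds_def
  proof (intro exI[of _ "?T ` lip0 p UNIV"] exI[of _ ?T] exI[of _ ?P] exI[of _ "max 1 M"]
      conjI ballI allI refl)
    have T_in: "?T f \<in> linf_lip0 p Y" and T_bound: "linf_norm Y (?T f) \<le> lipnorm UNIV f"
      if "f \<in> lip0 p UNIV" for f
      using restrict_family_in_linf_lip0[where Y = Y, OF that base_in] by auto
    show "?T ` lip0 p UNIV \<subseteq> linf_lip0 p Y" using T_in by blast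
    show "?T (\<lambda>x. a * f x + b * g x) = (\<lambda>j x. a * ?T f j x + b * ?T g j x)" for f g a b
      by (rule restrict_family_linear)
    fix f assume f: "f \<in> lip0 p UNIV"
    show "linf_norm Y (?T f) \<le> max 1 M * lipnorm UNIV f"
      using T_bound[OF f] mult_right_mono[OF max.cobounded1[of 1 M] lip0_lipnorm_nonneg[OF f]]
      by linarith
    show "lipnorm UNIV f \<le> max 1 M * linf_norm Y (?T f)"
      using lipnorm_le_linf_norm_restrict_family[OF f]
        mult_right_mono[OF max.cobounded2[of M 1] linf_norm_nonneg[OF T_in[OF f]]]
      by linarith
  next
    show "?P ` linf_lip0 p Y \<subseteq> ?T ` lip0 p UNIV"
      using ultra_extension_in_lip0(1) by blast
  next
    fix F assume "F \<in> ?T ` lip0 p UNIV"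
    then show "?P F = F" by (auto simp: ultra_extension_restrict_family)
  next
    fix F G a b assume "F \<in> linf_lip0 p Y" "G \<in> linf_lip0 p Y"
    then show "?P (\<lambda>j x. a * F j x + b * G j x) = (\<lambda>j x. a * ?P F j x + b * ?P G j x)"
      by (simp add: ultra_extension_linear restrict_family_linear)
  next
    fix F assume F: "F \<in> linf_lip0 p Y"
    have "linf_norm Y (?P F) \<le> M * linf_norm Y F"
      using restrict_family_in_linf_lip0(2)[where Y = Y, OF ultra_extension_in_lip0(1)[OF F] base_in]
        ultra_extension_in_lip0(2)[OF F] by linarith
    also have "\<dots> \<le> max 1 M * linf_norm Y F"
      by (intro mult_right_mono linf_norm_nonneg[OF F]) simp
    finally show "linf_norm Y (?P F) \<le> max 1 M * linf_norm Y F" .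
  qed
qed

end

theorem mainTheorem12:
  fixes p :: "'a::metric_space"
    and Y :: "'j \<Rightarrow> 'a set"
    and R :: "'j \<Rightarrow> 'a \<Rightarrow> 'a"
    and U :: "'j filter"
  assumes maps: "\<And>j. R j ` UNIV \<subseteq> Y j"
    and base: "\<And>j. R j p = p"
    and lip: "\<exists>M. \<forall>j. M-lipschitz_on UNIV (R j)"
    and ultra: "is_ultrafilter U"
    and lim: "\<And>x. ((\<lambda>j. R j x) \<longlongrightarrow> x) U"
  shows "lip0_compl_embeds p Y"
proof -
  obtain M where "\<And>j. M-lipschitz_on UNIV (R j)" using lip by blast
  then interpret ultra_approximating_family p Y R U M
    using maps base ultra lim by unfold_locales blast+
  show ?thesis by (rule lip0_compl_embeds)
qed

end
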